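(* Let $(s_n)$ be a sequence of nonnegative reals and $D\in\mathbb{N}\setminus\{0\}$ with $s_n\leq D$ for all $n$. Let $(\alpha_n)\subset\,]0,1[$, $(r_n),(v_n)\subset\mathbb{R}$, $(\gamma_n)\subset[0,\infty)$, and let ${\rm A'}:\mathbb{N}\times\mathbb{N}\to\mathbb{N}$ be monotone in both variables with $\prod_{i=m}^{{\rm A'}(m,k)}(1-\alpha_i)\leq\frac{1}{k+1}$ for all $k,m\in\mathbb{N}$. Let $k,n,p\in\mathbb{N}$ and assume (i) $\forall m\in[n,p]\ \big(v_m\leq\frac{1}{4(k+1)(p+1)}\ \wedge\ r_m\leq\frac{1}{4(k+1)}\big)$; (ii) $\forall m\in\mathbb{N}\ \big(\sum_{i=n}^{n+m}\gamma_i\leq\frac{1}{4(k+1)}\big)$; (iii) $\forall m\in\mathbb{N}\ \big(s_{m+1}\leq(1-\alpha_m)(s_m+v_m)+\alpha_m r_m+\gamma_m\big)$. Then $s_m\leq\frac{1}{k+1}$ for all $m\in[\sigma_2(k,n),p]$, where $\sigma_2(k,n):={\rm A'}\big(n,4D(k+1)-1\big)+1$.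
   Context: ${\rm A'}$ monotone in both variables means: $k\leq k'$ and $m\leq m'$ imply ${\rm A'}(m,k)\leq{\rm A'}(m',k')$. $[a,b]$ denotes the set of natural numbers $m$ with $a\leq m\leq b$. *)

theory Defs
  imports Complex_Main
begin

definition sigma2 :: "(nat \<Rightarrow> nat \<Rightarrow> nat) \<Rightarrow> nat \<Rightarrow> nat \<Rightarrow> nat \<Rightarrow> nat" where
  "sigma2 A' D k n = A' n (4 * D * (k + 1) - 1) + 1"

end

theory Submission
  imports Defs
begin

text \<open>Unrolling the recursive inequality from \<open>n\<close> to \<open>m\<close> bounds \<open>s m\<close> by four terms: the
  initial value damped by \<open>\<Prod>i\<in>[n,m[. (1 - \<alpha>\<^sub>i)\<close>, a convex combination of the bound on the
  \<open>r\<^sub>i\<close>, the accumulated \<open>v\<^sub>i\<close> and the accumulated \<open>\<gamma>\<^sub>i\<close>.  Past \<open>\<sigma>\<^sub>2(k,n)\<close> the damping factor is at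
  most \<open>1/(4D(k+1))\<close>, and the hypotheses make each of the four terms at most \<open>1/(4(k+1))\<close>.\<close>

lemma prod_le_prod_subset:
  fixes f :: "'a \<Rightarrow> real"
  assumes "finite B" "A \<subseteq> B" "\<And>x. x \<in> B \<Longrightarrow> 0 \<le> f x \<and> f x \<le> 1"
  shows "prod f B \<le> prod f A"
proof -
  have "prod f B = prod f (B - A) * prod f A"
    using assms(1,2) by (simp add: prod.subset_diff)
  also have "\<dots> \<le> 1 * prod f A"
    using assms by (intro mult_right_mono prod_le_1 prod_nonneg) auto
  finally show ?thesis by simp
qed

lemma unfold_recursive_inequality:
  fixes s v r gamma alpha :: "nat \<Rightarrow> real"
  assumes "\<And>j. n \<le> j \<Longrightarrow> j < n + d \<Longrightarrow> 0 \<le> alpha j \<and> alpha j \<le> 1"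
    and "\<And>j. n \<le> j \<Longrightarrow> j < n + d \<Longrightarrow> gamma j \<ge> 0"
    and "\<And>j. n \<le> j \<Longrightarrow> j < n + d \<Longrightarrow> v j \<le> c' \<and> r j \<le> c"
    and "c' \<ge> 0"
    and "\<And>j. n \<le> j \<Longrightarrow> j < n + d \<Longrightarrow>
           s (j + 1) \<le> (1 - alpha j) * (s j + v j) + alpha j * r j + gamma j"
  shows "s (n + d) \<le> (\<Prod>i\<in>{n..<n+d}. 1 - alpha i) * s n + (1 - (\<Prod>i\<in>{n..<n+d}. 1 - alpha i)) * c
           + real d * c' + (\<Sum>i\<in>{n..<n+d}. gamma i)"
  using assms(1,2,3,5)
proof (induction d)
  case 0
  then show ?case by simp
next
  case (Suc d)
  let ?j = "n + d"
  define P where "P = (\<Prod>i\<in>{n..<?j}. 1 - alpha i)"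
  define E where "E = real d * c' + (\<Sum>i\<in>{n..<?j}. gamma i) + c'"
  have IH: "s ?j \<le> P * s n + (1 - P) * c + real d * c' + (\<Sum>i\<in>{n..<?j}. gamma i)"
    unfolding P_def using Suc by simp
  have a: "0 \<le> alpha ?j" "alpha ?j \<le> 1" and vr: "v ?j \<le> c'" "r ?j \<le> c"
    using Suc.prems(1,3)[of ?j] by auto
  have "E \<ge> 0"
  proof -
    have "(\<Sum>i\<in>{n..<?j}. gamma i) \<ge> 0"
      using Suc.prems(2) by (intro sum_nonneg) auto
    then show ?thesis
      unfolding E_def using \<open>c' \<ge> 0\<close> by simp
  qed
  have "s (?j + 1) \<le> (1 - alpha ?j) * (s ?j + v ?j) + alpha ?j * r ?j + gamma ?j"
    using Suc.prems(4) by simp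
  also have "\<dots> \<le> (1 - alpha ?j) * (P * s n + (1 - P) * c + E) + alpha ?j * c + gamma ?j"
  proof -
    have "s ?j + v ?j \<le> P * s n + (1 - P) * c + E"
      using IH vr unfolding E_def by linarith
    then have "(1 - alpha ?j) * (s ?j + v ?j) \<le> (1 - alpha ?j) * (P * s n + (1 - P) * c + E)"
      using a by (intro mult_left_mono) simp_all
    moreover have "alpha ?j * r ?j \<le> alpha ?j * c"
      using a vr by (intro mult_left_mono)
    ultimately show ?thesis by linarith
  qed
  also have "\<dots> \<le> (1 - alpha ?j) * (P * s n + (1 - P) * c) + E + alpha ?j * c + gamma ?j"
    using mult_left_le_one_le[OF \<open>E \<ge> 0\<close>, of "1 - alpha ?j"] a by (simp add: algebra_simps)
  also have "\<dots> = (P * (1 - alpha ?j)) * s n + (1 - P * (1 - alpha ?j)) * c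
                   + real (Suc d) * c' + ((\<Sum>i\<in>{n..<?j}. gamma i) + gamma ?j)"
    unfolding E_def by (simp add: algebra_simps)
  finally show ?case
    unfolding P_def by (simp add: prod.atLeastLessThan_Suc sum.atLeastLessThan_Suc)
qed

lemma damping_past_rate_index:
  fixes alpha :: "nat \<Rightarrow> real"
  assumes "\<And>i. 0 \<le> alpha i \<and> alpha i \<le> 1"
    and "(\<Prod>i\<in>{n..N}. 1 - alpha i) \<le> b" "b < 1" "N < m"
  shows "n \<le> N" "(\<Prod>i\<in>{n..<m}. 1 - alpha i) \<le> b"
proof -
  show "n \<le> N"
    using assms(2,3) by (cases "n \<le> N") auto
  then show "(\<Prod>i\<in>{n..<m}. 1 - alpha i) \<le> b"
    using assms by (intro order.trans[OF prod_le_prod_subset assms(2)]) auto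
qed

theorem mainTheorem6:
  fixes s v r gamma alpha :: "nat \<Rightarrow> real"
    and D :: nat and A' :: "nat \<Rightarrow> nat \<Rightarrow> nat" and k n p :: nat
  assumes s_nonneg: "\<And>m. s m \<ge> 0"
    and D_pos: "D \<noteq> 0"
    and s_le_D: "\<And>m. s m \<le> real D"
    and alpha_range: "\<And>m. 0 < alpha m \<and> alpha m < 1"
    and gamma_nonneg: "\<And>m. gamma m \<ge> 0"
    and A'_mono: "\<And>m m' k k'. m \<le> m' \<Longrightarrow> k \<le> k' \<Longrightarrow> A' m k \<le> A' m' k'"
    and A'_rate: "\<And>k m. (\<Prod>i\<in>{m..A' m k}. (1 - alpha i)) \<le> 1 / (real k + 1)"
    and i: "\<And>m. n \<le> m \<Longrightarrow> m \<le> p \<Longrightarrow>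
              v m \<le> 1 / (4 * (real k + 1) * (real p + 1)) \<and> r m \<le> 1 / (4 * (real k + 1))"
    and ii: "\<And>m. (\<Sum>i\<in>{n..n+m}. gamma i) \<le> 1 / (4 * (real k + 1))"
    and iii: "\<And>m. s (m + 1) \<le> (1 - alpha m) * (s m + v m) + alpha m * r m + gamma m"
  shows "\<forall>m. sigma2 A' D k n \<le> m \<and> m \<le> p \<longrightarrow> s m \<le> 1 / (real k + 1)"
proof (intro allI impI)
  fix m assume m: "sigma2 A' D k n \<le> m \<and> m \<le> p"
  define c where "c = 1 / (4 * (real k + 1))"
  define N where "N = A' n (4 * D * (k + 1) - 1)"
  define P where "P = (\<Prod>i\<in>{n..<m}. 1 - alpha i)"
  have alpha01: "0 \<le> alpha j \<and> alpha j \<le> 1" for j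
    using alpha_range[of j] by simp
  have rateN: "(\<Prod>i\<in>{n..N}. 1 - alpha i) \<le> c / real D"
    using A'_rate[of n "4 * D * (k + 1) - 1"] D_pos
    by (simp add: N_def c_def of_nat_diff Suc_leI algebra_simps)
  have "real D * (4 * real k + 4) \<ge> 1 * 4"
    using D_pos by (intro mult_mono) auto
  then have "c / real D < 1"
    using D_pos by (simp add: c_def field_simps)
  moreover have "N < m"
    using m by (simp add: sigma2_def N_def)
  ultimately have "n \<le> N" and P_le: "P \<le> c / real D"
    using damping_past_rate_index[OF alpha01 rateN] unfolding P_def by auto
  then obtain d where d: "m = n + d"
    using \<open>N < m\<close> le_Suc_ex by fastforce
  have "0 \<le> P"
    unfolding P_def using alpha01 by (intro prod_nonneg) auto
  have "P * s n \<le> c / real D * real D"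
    using \<open>0 \<le> P\<close> P_le s_le_D[of n] s_nonneg[of n] by (intro mult_mono) simp_all
  then have "P * s n \<le> c"
    using D_pos by simp
  moreover have "(1 - P) * c \<le> c"
    using \<open>0 \<le> P\<close> by (simp add: c_def divide_right_mono)
  moreover have "real d * (c / (real p + 1)) \<le> (real p + 1) * (c / (real p + 1))"
    using m d by (intro mult_right_mono) (simp_all add: c_def)
  moreover have "(\<Sum>i\<in>{n..<m}. gamma i) \<le> c"
    using ii[of "d - 1"] d \<open>N < m\<close> \<open>n \<le> N\<close>
    by (simp add: c_def atLeastLessThanSuc_atLeastAtMost[symmetric])
  moreover have "s m \<le> P * s n + (1 - P) * c + real d * (c / (real p + 1)) + (\<Sum>i\<in>{n..<m}. gamma i)"
    unfolding P_def d
  proof (rule unfold_recursive_inequality[where v = v and r = r])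
    show "v j \<le> c / (real p + 1) \<and> r j \<le> c" if "n \<le> j" "j < n + d" for j
      using i[of j] that d m by (simp add: c_def)
  qed (use alpha01 gamma_nonneg iii in \<open>simp_all add: c_def\<close>)
  ultimately have "s m \<le> 4 * c"
    by simp
  also have "4 * c = 1 / (real k + 1)"
    by (simp add: c_def field_simps)
  finally show "s m \<le> 1 / (real k + 1)" .
qed

end
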